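(* Let $d\in\mathbb N$, let $\mathcal S=\{s_i\}_{i=1}^{2^d}\subset[1,4]$ be strictly increasing and $\mathcal A=\{\alpha_j\}_{j=1}^d\subset\mathbb R$ be strictly increasing. Set $\|\mathcal S\|:=\min_{1\le i<j\le 2^d}|s_j-s_i|$ and $\Pi_j\mathcal A:=\prod_{i=1,i\ne j}^d|\alpha_j-\alpha_i|$ (with $\Pi_1\mathcal A=1$ if $d=1$). Suppose $A>0$ and real numbers $a_1,\dots,a_d$ satisfy $\big|\sum_{j=1}^d a_j s^{\alpha_j}\big|\le A$ for every $s\in\mathcal S$. Then for every $1\le j\le d$, $$|a_j|\le\frac{4^{d\left((\alpha_d-\alpha_1)+\max_{1\le i\le d}|\alpha_i|+2\right)}\,A}{\|\mathcal S\|^{d-1}\,\Pi_j\mathcal A}.$$ *)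

theory Defs
  imports "HOL-Analysis.Analysis"
begin

definition set_gap :: "(nat \<Rightarrow> real) \<Rightarrow> nat \<Rightarrow> real" where
  "set_gap s d = Min {\<bar>s j - s i\<bar> | i j. 1 \<le> i \<and> i < j \<and> j \<le> 2 ^ d}"

definition Pi_A :: "(nat \<Rightarrow> real) \<Rightarrow> nat \<Rightarrow> nat \<Rightarrow> real" where
  "Pi_A \<alpha> d j = (\<Prod>i\<in>{1..d} - {j}. \<bar>\<alpha> j - \<alpha> i\<bar>)"

end

theory Submission imports Defs begin

text \<open>
  Induction on the number of exponents. Dividing the sum by \<open>x powr \<beta>\<^sub>r\<close> for some index
  \<open>r \<noteq> j\<close> and differentiating removes the term \<open>r\<close> and multiplies every other coefficient by
  \<open>\<beta>\<^sub>i - \<beta>\<^sub>r\<close>. The mean value theorem, applied between consecutive pairs of sample points,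
  yields half as many new sample points, still separated by the gap \<open>g\<close>, at which the
  derivative is bounded by \<open>2/g\<close> times the bound on the quotient. After removing all indices
  but \<open>j\<close>, the coefficient of \<open>j\<close> has picked up the factor \<open>\<Prod>\<^sub>i\<^sub>\<noteq>\<^sub>j \<bar>\<beta>\<^sub>j - \<beta>\<^sub>i\<bar>\<close>.
\<close>

definition separated_points :: "real \<Rightarrow> real \<Rightarrow> nat \<Rightarrow> (nat \<Rightarrow> real) \<Rightarrow> bool" where
  "separated_points L g N t \<longleftrightarrow>
     (\<forall>k. Suc k < N \<longrightarrow> t k + g \<le> t (Suc k)) \<and> (\<forall>k<N. 1 \<le> t k \<and> t k \<le> L)"

lemma powr_le_powr_bound:
  fixes x c R L :: real
  assumes "1 \<le> x" "x \<le> L" "\<bar>c\<bar> \<le> R"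
  shows "x powr c \<le> L powr R"
proof -
  have "x powr c \<le> x powr \<bar>c\<bar>" by (rule powr_mono) (use assms in auto)
  also have "\<dots> \<le> L powr \<bar>c\<bar>" by (rule powr_mono2) (use assms in auto)
  also have "\<dots> \<le> L powr R" by (rule powr_mono) (use assms in auto)
  finally show ?thesis .
qed

lemma separated_points_mean_value:
  assumes sep: "separated_points L g (2 * N) t" and "g > 0"
    and deriv: "\<And>x. 1 \<le> x \<Longrightarrow> x \<le> L \<Longrightarrow> (h has_real_derivative h' x) (at x)"
    and bound: "\<And>k. k < 2 * N \<Longrightarrow> \<bar>h (t k)\<bar> \<le> C"
  obtains \<xi> where "separated_points L g N \<xi>" "\<And>k. k < N \<Longrightarrow> \<bar>h' (\<xi> k)\<bar> \<le> 2 * C / g"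
proof -
  have gap: "t (2*k) + g \<le> t (2*k+1)" "1 \<le> t (2*k)" "t (2*k+1) \<le> L" if "k < N" for k
    using sep that unfolding separated_points_def by auto
  have "\<exists>z. t (2*k) < z \<and> z < t (2*k+1) \<and>
          h (t (2*k+1)) - h (t (2*k)) = (t (2*k+1) - t (2*k)) * h' z" if "k < N" for k
  proof (rule MVT2)
    show "t (2*k) < t (2*k+1)" using gap[OF that] \<open>g > 0\<close> by linarith
  next
    fix x assume "t (2*k) \<le> x" "x \<le> t (2*k+1)"
    then show "(h has_real_derivative h' x) (at x)" using gap[OF that] by (intro deriv) auto
  qed
  then obtain \<xi> where \<xi>: "\<And>k. k < N \<Longrightarrow> t (2*k) < \<xi> k \<and> \<xi> k < t (2*k+1) \<and>
      h (t (2*k+1)) - h (t (2*k)) = (t (2*k+1) - t (2*k)) * h' (\<xi> k)"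
    by metis
  show ?thesis
  proof
    have "\<xi> k + g \<le> \<xi> (Suc k)" if "Suc k < N" for k
    proof -
      have "t (2*k+1) + g \<le> t (Suc (2*k+1))"
        using sep that unfolding separated_points_def by simp
      then show ?thesis using \<xi>[of k] \<xi>[of "Suc k"] that by simp
    qed
    moreover have "1 \<le> \<xi> k \<and> \<xi> k \<le> L" if "k < N" for k
      using \<xi>[OF that] gap[OF that] by linarith
    ultimately show "separated_points L g N \<xi>" unfolding separated_points_def by blast
  next
    fix k assume k: "k < N"
    have "g * \<bar>h' (\<xi> k)\<bar> \<le> (t (2*k+1) - t (2*k)) * \<bar>h' (\<xi> k)\<bar>"
      using gap[OF k] by (intro mult_right_mono) auto
    also have "\<dots> = \<bar>h (t (2*k+1)) - h (t (2*k))\<bar>"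
      using \<xi>[OF k] by (simp add: abs_mult)
    also have "\<dots> \<le> 2 * C" using bound[of "2*k"] bound[of "2*k+1"] k by linarith
    finally show "\<bar>h' (\<xi> k)\<bar> \<le> 2 * C / g"
      using \<open>g > 0\<close> by (simp add: pos_le_divide_eq mult.commute)
  qed
qed

lemma has_real_derivative_sum_powr:
  fixes x :: real
  assumes "x > 0"
  shows "((\<lambda>x. \<Sum>i\<in>J. b i * x powr (e i)) has_real_derivative
           (\<Sum>i\<in>J. b i * e i * x powr (e i - 1))) (at x)"
  using DERIV_sum[OF DERIV_cmult[OF has_real_derivative_powr[OF assms]]]
  by (simp add: mult.assoc)

lemma abs_sum_powr_shift_le:
  fixes x :: real
  assumes "1 \<le> x" "x \<le> L" "\<bar>c\<bar> \<le> R" "\<bar>\<Sum>i\<in>J. b i * x powr \<beta> i\<bar> \<le> B"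
  shows "\<bar>\<Sum>i\<in>J. b i * x powr (\<beta> i - c)\<bar> \<le> B * L powr R"
proof -
  have "(\<Sum>i\<in>J. b i * x powr (\<beta> i - c)) = x powr (- c) * (\<Sum>i\<in>J. b i * x powr \<beta> i)"
    unfolding sum_distrib_left
    by (rule sum.cong[OF refl]) (simp add: powr_diff powr_minus divide_inverse mult_ac)
  then have "\<bar>\<Sum>i\<in>J. b i * x powr (\<beta> i - c)\<bar> = x powr (- c) * \<bar>\<Sum>i\<in>J. b i * x powr \<beta> i\<bar>"
    by (simp add: abs_mult)
  also have "\<dots> \<le> L powr R * B"
    using assms powr_le_powr_bound[of x L "- c" R] by (intro mult_mono) auto
  finally show ?thesis by (simp add: mult.commute)
qed

lemma exp_sum_coeff_bound:
  fixes \<beta> b :: "'i \<Rightarrow> real" and t :: "nat \<Rightarrow> real"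
  assumes "finite J" "card J = Suc n" "j \<in> J" "g > 0"
    and "separated_points L g (2 ^ n) t"
    and "\<forall>i\<in>J. \<bar>\<beta> i\<bar> \<le> R" "\<forall>i\<in>J. \<forall>i'\<in>J. \<bar>\<beta> i - \<beta> i'\<bar> \<le> D"
    and "\<forall>k<2 ^ n. \<bar>\<Sum>i\<in>J. b i * t k powr \<beta> i\<bar> \<le> B"
  shows "\<bar>b j\<bar> * (\<Prod>i\<in>J - {j}. \<bar>\<beta> j - \<beta> i\<bar>) \<le> B * (2 / g) ^ n * L powr (R + real n * (D + 1))"
  using assms
proof (induction n arbitrary: J t b \<beta> B R)
  case 0
  then have J: "J = {j}" by (auto simp: card_1_singleton_iff)
  have t0: "1 \<le> t 0" "t 0 \<le> L" using "0.prems"(5) unfolding separated_points_def by auto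
  have "\<bar>b j\<bar> = \<bar>\<Sum>i\<in>J. b i * t 0 powr (\<beta> i - \<beta> j)\<bar>" using J t0 by simp
  also have "\<dots> \<le> B * L powr R"
    using "0.prems" J t0 by (intro abs_sum_powr_shift_le) auto
  finally show ?case using J by simp
next
  case (Suc n)
  have "card (J - {j}) = Suc n" using Suc.prems(1-3) by simp
  then have "J - {j} \<noteq> {}" by (metis card.empty nat.distinct(1))
  then obtain r where r: "r \<in> J" "r \<noteq> j" by blast
  define b' where "b' = (\<lambda>i. b i * (\<beta> i - \<beta> r))"
  define \<beta>' where "\<beta>' = (\<lambda>i. \<beta> i - \<beta> r - 1)"
  let ?h = "\<lambda>x. \<Sum>i\<in>J. b i * x powr (\<beta> i - \<beta> r)"
  let ?h' = "\<lambda>x. \<Sum>i\<in>J. b i * (\<beta> i - \<beta> r) * x powr (\<beta> i - \<beta> r - 1)"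
  have sep: "separated_points L g (2 * 2 ^ n) t" using Suc.prems(5) by simp
  have deriv: "\<And>x. 1 \<le> x \<Longrightarrow> x \<le> L \<Longrightarrow> (?h has_real_derivative ?h' x) (at x)"
    by (rule has_real_derivative_sum_powr) simp
  have bound: "\<bar>?h (t k)\<bar> \<le> B * L powr R" if "k < 2 * 2 ^ n" for k
    using Suc.prems(5,6,8) r(1) that unfolding separated_points_def
    by (intro abs_sum_powr_shift_le) auto
  obtain \<xi> where \<xi>: "separated_points L g (2 ^ n) \<xi>"
      "\<And>k. k < 2 ^ n \<Longrightarrow> \<bar>?h' (\<xi> k)\<bar> \<le> 2 * (B * L powr R) / g"
    using separated_points_mean_value[OF sep \<open>g > 0\<close> deriv bound] by blast
  have h'_eq: "?h' x = (\<Sum>i\<in>J - {r}. b' i * x powr \<beta>' i)" for x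
    using Suc.prems(1) r(1) unfolding b'_def \<beta>'_def by (subst sum.remove[of J r]) auto
  have "\<bar>b j\<bar> * (\<Prod>i\<in>J - {j}. \<bar>\<beta> j - \<beta> i\<bar>)
      = \<bar>b' j\<bar> * (\<Prod>i\<in>J - {r} - {j}. \<bar>\<beta>' j - \<beta>' i\<bar>)"
    using Suc.prems(1) r unfolding b'_def \<beta>'_def
    by (subst prod.remove[of "J - {j}" r]) (auto simp: abs_mult Diff_insert2[symmetric] insert_commute)
  also have "\<dots> \<le> 2 * (B * L powr R) / g * (2 / g) ^ n * L powr ((D + 1) + real n * (D + 1))"
  proof (rule Suc.IH)
    show "finite (J - {r})" "card (J - {r}) = Suc n" "j \<in> J - {r}"
      using Suc.prems(1-3) r by auto
    show "\<forall>i\<in>J - {r}. \<bar>\<beta>' i\<bar> \<le> D + 1"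
      using Suc.prems(7) r(1) unfolding \<beta>'_def by (fastforce simp: abs_le_iff)
    show "\<forall>i\<in>J - {r}. \<forall>i'\<in>J - {r}. \<bar>\<beta>' i - \<beta>' i'\<bar> \<le> D"
      using Suc.prems(7) unfolding \<beta>'_def by auto
    show "\<forall>k<2 ^ n. \<bar>\<Sum>i\<in>J - {r}. b' i * \<xi> k powr \<beta>' i\<bar> \<le> 2 * (B * L powr R) / g"
      using \<xi>(2) by (simp add: h'_eq)
  qed (use \<xi>(1) \<open>g > 0\<close> in auto)
  also have "\<dots> = B * (2 / g) ^ Suc n * (L powr R * L powr ((D + 1) + real n * (D + 1)))"
    by (simp add: field_simps)
  also have "\<dots> = B * (2 / g) ^ Suc n * L powr (R + real (Suc n) * (D + 1))"
    by (simp add: powr_add[symmetric] algebra_simps)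
  finally show ?case .
qed

lemma finite_set_gap_set: "finite {\<bar>s j - s i\<bar> | i j. 1 \<le> i \<and> i < j \<and> j \<le> (2::nat) ^ d}"
proof -
  have "{\<bar>s j - s i\<bar> | i j. 1 \<le> i \<and> i < j \<and> j \<le> (2::nat) ^ d}
      \<subseteq> (\<lambda>(i, j). \<bar>s j - s i\<bar>) ` ({1..2 ^ d} \<times> {1..2 ^ d})"
    by force
  then show ?thesis by (rule finite_subset) auto
qed

lemma set_gap_le:
  assumes "1 \<le> i" "i < j" "j \<le> 2 ^ d"
  shows "set_gap s d \<le> \<bar>s j - s i\<bar>"
  unfolding set_gap_def using assms
  by (intro Min_le finite_set_gap_set CollectI exI[of _ i] exI[of _ j]) simp

lemma set_gap_pos:
  assumes "d \<ge> 1" "strict_mono_on {1..2 ^ d} s"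
  shows "set_gap s d > 0"
proof -
  let ?S = "{\<bar>s j - s i\<bar> | i j. 1 \<le> i \<and> i < j \<and> j \<le> (2::nat) ^ d}"
  have "(2::nat) \<le> 2 ^ d" using power_increasing[OF assms(1), of "2::nat"] by simp
  then have "\<bar>s 2 - s 1\<bar> \<in> ?S" by (intro CollectI exI[of _ 1] exI[of _ 2]) simp
  then have nonempty: "?S \<noteq> {}" by blast
  have pos: "\<forall>x\<in>?S. 0 < x"
  proof
    fix x assume "x \<in> ?S"
    then obtain i j where "x = \<bar>s j - s i\<bar>" "1 \<le> i" "i < j" "j \<le> (2::nat) ^ d" by blast
    then show "0 < x" using strict_mono_onD[OF assms(2), of i j] by auto
  qed
  show ?thesis
    unfolding set_gap_def by (subst Min_gr_iff[OF finite_set_gap_set nonempty]) (rule pos)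
qed

lemma separated_points_set_gap:
  assumes "strict_mono_on {1..2 ^ d} s" "\<forall>i\<in>{1..2 ^ d}. 1 \<le> s i \<and> s i \<le> L" "N \<le> 2 ^ d"
  shows "separated_points L (set_gap s d) N (\<lambda>k. s (Suc k))"
  unfolding separated_points_def
proof (intro conjI allI impI)
  fix k assume k: "Suc k < N"
  have "s (Suc k) < s (Suc (Suc k))"
    using strict_mono_onD[OF assms(1)] k assms(3) by auto
  then show "s (Suc k) + set_gap s d \<le> s (Suc (Suc k))"
    using set_gap_le[of "Suc k" "Suc (Suc k)" d s] k assms(3) by simp
qed (use assms(2,3) in auto)

lemma Pi_A_pos:
  assumes "inj_on \<alpha> {1..d}" "j \<in> {1..d}"
  shows "Pi_A \<alpha> d j > 0"
  unfolding Pi_A_def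
proof (rule prod_pos)
  fix i assume "i \<in> {1..d} - {j}"
  then have "\<alpha> j \<noteq> \<alpha> i" using inj_onD[OF assms(1)] assms(2) by blast
  then show "0 < \<bar>\<alpha> j - \<alpha> i\<bar>" by simp
qed

lemma mono_on_abs_diff_le:
  fixes f :: "nat \<Rightarrow> real"
  assumes "mono_on {m..n} f" "i \<in> {m..n}" "i' \<in> {m..n}"
  shows "\<bar>f i - f i'\<bar> \<le> f n - f m"
proof -
  have "f m \<le> f k \<and> f k \<le> f n" if "k \<in> {m..n}" for k
    using mono_onD[OF assms(1)] that by auto
  from this[OF assms(2)] this[OF assms(3)] show ?thesis by (simp add: abs_le_iff)
qed

lemma coeff_bound_constant_le:
  fixes A g M D :: real
  assumes "d \<ge> 1" "A \<ge> 0" "g > 0" "M \<ge> 0" "D \<ge> 0"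
  shows "A * (2 / g) ^ (d - 1) * 4 powr (M + real (d - 1) * (D + 1))
           \<le> 4 powr (real d * (D + M + 2)) * A / g ^ (d - 1)"
proof -
  have "A * (2 / g) ^ (d - 1) * 4 powr (M + real (d - 1) * (D + 1))
      = A / g ^ (d - 1) * (2 powr real (d - 1) * 4 powr (M + real (d - 1) * (D + 1)))"
    by (simp add: power_divide powr_realpow)
  also have "\<dots> \<le> A / g ^ (d - 1) * (4 powr real (d - 1) * 4 powr (M + real (d - 1) * (D + 1)))"
    using assms by (intro mult_left_mono mult_right_mono powr_mono2) auto
  also have "\<dots> = A / g ^ (d - 1) * 4 powr (real (d - 1) + M + real (d - 1) * (D + 1))"
    by (simp add: powr_add[symmetric] add.assoc)
  also have "\<dots> \<le> A / g ^ (d - 1) * 4 powr (real d * (D + M + 2))"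
  proof (intro mult_left_mono powr_mono)
    have "real d * M \<ge> M" using assms(1,4) by (simp add: mult_le_cancel_right1)
    then show "real (d - 1) + M + real (d - 1) * (D + 1) \<le> real d * (D + M + 2)"
      using assms(1,5) by (simp add: of_nat_diff algebra_simps)
  qed (use assms in auto)
  finally show ?thesis by (simp add: mult.commute)
qed

theorem lemma10p3:
  fixes d :: nat and s \<alpha> a :: "nat \<Rightarrow> real" and A :: real
  assumes "d \<ge> 1"
    and "strict_mono_on {1..2 ^ d} s"
    and "\<forall>i\<in>{1..2 ^ d}. 1 \<le> s i \<and> s i \<le> 4"
    and "strict_mono_on {1..d} \<alpha>"
    and "A > 0"
    and "\<forall>i\<in>{1..2 ^ d}. \<bar>\<Sum>j=1..d. a j * s i powr \<alpha> j\<bar> \<le> A"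
    and "j \<in> {1..d}"
  shows "\<bar>a j\<bar> \<le> 4 powr (real d * ((\<alpha> d - \<alpha> 1) + (MAX i\<in>{1..d}. \<bar>\<alpha> i\<bar>) + 2)) * A
                   / (set_gap s d ^ (d - 1) * Pi_A \<alpha> d j)"
proof -
  define M where "M = (MAX i\<in>{1..d}. \<bar>\<alpha> i\<bar>)"
  define D where "D = \<alpha> d - \<alpha> 1"
  define g where "g = set_gap s d"
  have M: "\<forall>i\<in>{1..d}. \<bar>\<alpha> i\<bar> \<le> M" unfolding M_def by simp
  then have "M \<ge> 0" using assms(1) by force
  have D: "\<bar>\<alpha> i - \<alpha> i'\<bar> \<le> D" if "i \<in> {1..d}" "i' \<in> {1..d}" for i i'
    unfolding D_def using strict_mono_on_imp_mono_on[OF assms(4)] that by (rule mono_on_abs_diff_le)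
  have "D \<ge> 0" using D[of 1 1] assms(1) by simp
  have "g > 0" unfolding g_def using assms(1,2) by (rule set_gap_pos)
  have "Pi_A \<alpha> d j > 0" using strict_mono_on_imp_inj_on[OF assms(4)] assms(7) by (rule Pi_A_pos)
  have "(2::nat) ^ (d - 1) \<le> 2 ^ d" by (intro power_increasing) auto
  have "Suc k \<in> {1..2 ^ d}" if "k < 2 ^ (d - 1)" for k
    using less_le_trans[OF that \<open>2 ^ (d - 1) \<le> 2 ^ d\<close>] by simp
  then have samples: "\<forall>k<2 ^ (d - 1). \<bar>\<Sum>i\<in>{1..d}. a i * s (Suc k) powr \<alpha> i\<bar> \<le> A"
    using assms(6) by blast
  have "\<bar>a j\<bar> * Pi_A \<alpha> d j \<le> A * (2 / g) ^ (d - 1) * 4 powr (M + real (d - 1) * (D + 1))"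
    unfolding Pi_A_def
  proof (rule exp_sum_coeff_bound)
    show "separated_points 4 g (2 ^ (d - 1)) (\<lambda>k. s (Suc k))"
      unfolding g_def using assms(2,3) \<open>2 ^ (d - 1) \<le> 2 ^ d\<close> by (rule separated_points_set_gap)
  qed (use assms(1,7) \<open>g > 0\<close> M D samples in auto)
  also have "\<dots> \<le> 4 powr (real d * (D + M + 2)) * A / g ^ (d - 1)"
    using assms(1,5) \<open>g > 0\<close> \<open>M \<ge> 0\<close> \<open>D \<ge> 0\<close> by (intro coeff_bound_constant_le) auto
  finally show ?thesis
    using \<open>Pi_A \<alpha> d j > 0\<close> \<open>g > 0\<close> unfolding M_def D_def g_def
    by (simp add: pos_le_divide_eq mult.commute mult.left_commute)
qed

end
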